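(* Let $G$ be a graph with girth at least $15$ and minimum degree $\delta(G)\ge 2$. Then $G\notin\mathcal U$.
   Context: All graphs are finite and simple. A set $P\subseteq V(G)$ is an open packing if no two distinct vertices of $P$ have a common neighbor; it is maximal if maximal under inclusion among open packings. $\rho^o(G)$ is the maximum size of an open packing and $\rho^o_L(G)$ the minimum size of a maximal open packing; $\mathcal U$ is the class of graphs with $\rho^o_L(G)=\rho^o(G)$. The girth is the length of a shortest cycle ($\infty$ if acyclic). *)

theory Defs
  imports Main
begin

definition finite_simple_graph :: "'a set \<Rightarrow> ('a \<Rightarrow> 'a \<Rightarrow> bool) \<Rightarrow> bool" where
  "finite_simple_graph V E \<longleftrightarrow> finite V \<and> V \<noteq> {} \<and>
     (\<forall>u v. E u v \<longrightarrow> u \<in> V \<and> v \<in> V) \<and>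
     (\<forall>u v. E u v \<longrightarrow> E v u) \<and> (\<forall>v. \<not> E v v)"

definition nbhd :: "'a set \<Rightarrow> ('a \<Rightarrow> 'a \<Rightarrow> bool) \<Rightarrow> 'a \<Rightarrow> 'a set" where
  "nbhd V E v = {u \<in> V. E v u}"

definition min_degree :: "'a set \<Rightarrow> ('a \<Rightarrow> 'a \<Rightarrow> bool) \<Rightarrow> nat" where
  "min_degree V E = Min ((\<lambda>v. card (nbhd V E v)) ` V)"

definition is_cycle :: "'a set \<Rightarrow> ('a \<Rightarrow> 'a \<Rightarrow> bool) \<Rightarrow> 'a list \<Rightarrow> bool" where
  "is_cycle V E cs \<longleftrightarrow> length cs \<ge> 3 \<and> distinct cs \<and> set cs \<subseteq> V \<and>
     (\<forall>i < length cs. E (cs ! i) (cs ! ((i + 1) mod length cs)))"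

text \<open>Girth at least g (girth is infinite for acyclic graphs): no cycle of length < g.\<close>
definition girth_at_least :: "'a set \<Rightarrow> ('a \<Rightarrow> 'a \<Rightarrow> bool) \<Rightarrow> nat \<Rightarrow> bool" where
  "girth_at_least V E g \<longleftrightarrow> (\<forall>cs. is_cycle V E cs \<longrightarrow> length cs \<ge> g)"

definition open_packing :: "'a set \<Rightarrow> ('a \<Rightarrow> 'a \<Rightarrow> bool) \<Rightarrow> 'a set \<Rightarrow> bool" where
  "open_packing V E P \<longleftrightarrow> P \<subseteq> V \<and>
     (\<forall>u\<in>P. \<forall>v\<in>P. u \<noteq> v \<longrightarrow> \<not> (\<exists>w\<in>V. E u w \<and> E v w))"

definition maximal_open_packing :: "'a set \<Rightarrow> ('a \<Rightarrow> 'a \<Rightarrow> bool) \<Rightarrow> 'a set \<Rightarrow> bool" where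
  "maximal_open_packing V E P \<longleftrightarrow> open_packing V E P \<and>
     (\<forall>Q. open_packing V E Q \<and> P \<subseteq> Q \<longrightarrow> Q = P)"

definition open_packing_number :: "'a set \<Rightarrow> ('a \<Rightarrow> 'a \<Rightarrow> bool) \<Rightarrow> nat" where
  "open_packing_number V E = Max (card ` {P. open_packing V E P})"

definition lower_open_packing_number :: "'a set \<Rightarrow> ('a \<Rightarrow> 'a \<Rightarrow> bool) \<Rightarrow> nat" where
  "lower_open_packing_number V E = Min (card ` {P. maximal_open_packing V E P})"

definition in_class_U :: "'a set \<Rightarrow> ('a \<Rightarrow> 'a \<Rightarrow> bool) \<Rightarrow> bool" where
  "in_class_U V E \<longleftrightarrow> lower_open_packing_number V E = open_packing_number V E"

end

theory Submission
  imports Defs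
begin

text \<open>Fix a vertex a, neighbours w1 \<noteq> w2 of a, a neighbour b1 \<noteq> a of w1 and a neighbour
  b2 \<noteq> a of w2. Continue every non-backtracking walk a, wi, bi, w, z (i = 1, 2) by two more
  non-backtracking steps to a leaf; minimum degree two makes this possible. Since the girth is at
  least 15, any two of a and the leaves are the ends of a non-backtracking walk on at most 13
  vertices, which is too short to be closed up into a cycle through a common neighbour. So a
  together with the leaves is an open packing, contained in some maximal open packing P.
  Exchanging a for b1 and b2 in P gives a larger open packing: a vertex u of P with a common
  neighbour x \<noteq> wi of bi makes a, wi, bi, x, u such a walk, and its leaf lies in P and shares a
  neighbour with u.\<close>

fun non_backtracking :: "('a \<Rightarrow> 'a \<Rightarrow> bool) \<Rightarrow> 'a list \<Rightarrow> bool" where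
  "non_backtracking E (x # y # z # r) \<longleftrightarrow> E x y \<and> x \<noteq> z \<and> non_backtracking E (y # z # r)"
| "non_backtracking E [x, y] \<longleftrightarrow> E x y"
| "non_backtracking E _ \<longleftrightarrow> True"

lemma non_backtracking_Cons:
  "non_backtracking E (x # xs) \<longleftrightarrow> non_backtracking E xs \<and>
     (case xs of [] \<Rightarrow> True | y # ys \<Rightarrow> E x y \<and> (case ys of [] \<Rightarrow> True | z # _ \<Rightarrow> x \<noteq> z))"
  by (cases xs; cases "tl xs") (auto split: list.splits)

lemma successively_if_non_backtracking: "non_backtracking E xs \<Longrightarrow> successively E xs"
  by (induction E xs rule: non_backtracking.induct) auto

lemma non_backtracking_appendD: "non_backtracking E (xs @ ys) \<Longrightarrow> non_backtracking E xs"
proof (induction xs)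
  case (Cons x xs)
  then show ?case
    by (cases xs; cases "tl xs") (auto simp: non_backtracking_Cons split: list.splits)
qed simp

lemma non_backtracking_appendD2: "non_backtracking E (xs @ ys) \<Longrightarrow> non_backtracking E ys"
  by (induction xs) (simp_all add: non_backtracking_Cons)

lemma non_backtracking_glue:
  assumes "non_backtracking E (xs @ [u, v])" and "non_backtracking E (u # v # ys)"
  shows "non_backtracking E (xs @ u # v # ys)"
  using assms
proof (induction xs)
  case (Cons x xs)
  then show ?case
    by (cases xs; cases "tl xs") (auto simp: non_backtracking_Cons split: list.splits)
qed simp

lemma non_backtracking_rev:
  assumes "\<And>u v. E u v \<Longrightarrow> E v u" and "non_backtracking E xs"
  shows "non_backtracking E (rev xs)"
  using assms
proof (induction E xs rule: non_backtracking.induct)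
  case (1 E x y z r)
  have "E y z" using 1(3) by (cases r) auto
  then have "non_backtracking E [z, y, x]" using 1(2,3) by auto
  moreover have "non_backtracking E (rev r @ [z, y])" using 1 by simp
  ultimately show ?case using non_backtracking_glue[of E "rev r" z y "[x]"] by simp
qed simp_all

lemma non_backtracking_join:
  assumes sym: "\<And>u v. E u v \<Longrightarrow> E v u"
    and "non_backtracking E (c # x # xs)" "non_backtracking E (c # y # ys)" "x \<noteq> y"
  shows "non_backtracking E (rev xs @ x # c # y # ys)"
proof -
  have "non_backtracking E (rev xs @ [x, c])"
    using non_backtracking_rev[OF sym assms(2)] by simp
  moreover have "non_backtracking E (x # c # y # ys)"
    using assms(2-4) sym by (simp add: non_backtracking_Cons)
  ultimately show ?thesis by (rule non_backtracking_glue)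
qed

lemma finite_simple_graph_adj_mem:
  "finite_simple_graph V E \<Longrightarrow> E u v \<Longrightarrow> u \<in> V \<and> v \<in> V"
  by (simp add: finite_simple_graph_def)

lemma finite_simple_graph_adj_sym: "finite_simple_graph V E \<Longrightarrow> E u v \<Longrightarrow> E v u"
  by (simp add: finite_simple_graph_def)

lemma finite_simple_graph_adj_irrefl: "finite_simple_graph V E \<Longrightarrow> \<not> E v v"
  by (simp add: finite_simple_graph_def)

lemma set_subset_if_successively:
  "finite_simple_graph V E \<Longrightarrow> successively E (xs @ [y]) \<Longrightarrow> set xs \<subseteq> V"
  by (induction xs) (auto dest: finite_simple_graph_adj_mem simp: successively_Cons)

lemma is_cycle_if_closed_walk:
  assumes "finite_simple_graph V E" "successively E (cs @ [hd cs])" "distinct cs" "length cs \<ge> 3"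
  shows "is_cycle V E cs"
  unfolding is_cycle_def
proof (intro conjI allI impI)
  show "set cs \<subseteq> V" using set_subset_if_successively[OF assms(1,2)] .
  fix i assume i: "i < length cs"
  have "E ((cs @ [hd cs]) ! i) ((cs @ [hd cs]) ! Suc i)"
    using successively_nth[OF assms(2)] i by simp
  moreover have "(cs @ [hd cs]) ! Suc i = cs ! ((i + 1) mod length cs)"
  proof (cases "Suc i = length cs")
    case True
    then show ?thesis by (cases cs) (auto simp: nth_append)
  qed (use i in \<open>simp add: nth_append\<close>)
  ultimately show "E (cs ! i) (cs ! ((i + 1) mod length cs))"
    using i by (simp add: nth_append)
qed (use assms in auto)

lemma distinct_if_non_backtracking:
  assumes G: "finite_simple_graph V E" and girth: "girth_at_least V E g"
  shows "non_backtracking E xs \<Longrightarrow> length xs \<le> g \<Longrightarrow> distinct xs"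
proof (induction xs)
  case (Cons x xs)
  have "distinct xs" using Cons by (simp add: non_backtracking_Cons)
  show ?case
  proof (rule ccontr)
    assume "\<not> distinct (x # xs)"
    with \<open>distinct xs\<close> obtain r1 r2 where r: "xs = r1 @ x # r2" "x \<notin> set r1"
      by (metis distinct.simps(2) split_list_first)
    define cs where "cs = x # r1"
    have walk: "non_backtracking E (x # r1 @ [x])"
      using Cons.prems(1) r non_backtracking_appendD[of E "x # r1 @ [x]" r2] by simp
    have "length r1 \<ge> 2"
    proof (cases r1)
      case Nil
      then show ?thesis using walk finite_simple_graph_adj_irrefl[OF G] by simp
    next
      case (Cons y r1')
      then show ?thesis using walk by (cases r1') auto
    qed
    moreover have "successively E (cs @ [hd cs])"
      using successively_if_non_backtracking[OF walk] cs_def by simp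
    moreover have "distinct cs" using \<open>distinct xs\<close> r cs_def by simp
    ultimately have "is_cycle V E cs" using is_cycle_if_closed_walk[OF G] cs_def by simp
    then have "length cs \<ge> g" using girth by (simp add: girth_at_least_def)
    moreover have "length cs < length (x # xs)" using r cs_def by simp
    ultimately show False using Cons.prems(2) by simp
  qed
qed simp

lemma Cons_Cons_snoc_snoc_if_length_ge_4:
  assumes "4 \<le> length xs"
  obtains u y mid y' v where "xs = u # y # mid @ [y', v]"
proof -
  obtain u y rest where xs: "xs = u # y # rest" and "2 \<le> length rest"
    using assms by (cases xs; cases "tl xs") auto
  then obtain mid y' v where "rest = mid @ [y', v]"
    by (cases rest rule: rev_cases; cases "butlast rest" rule: rev_cases) auto
  with xs show ?thesis using that by simp
qed

lemma non_backtracking_snoc_not_mem: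
  assumes G: "finite_simple_graph V E" and girth: "girth_at_least V E g"
    and "non_backtracking E (ws @ [p, q])" "E q r" "p \<noteq> r" "length ws + 3 \<le> g"
  shows "r \<notin> set ws"
proof -
  have "E p q"
    using successively_if_non_backtracking[OF assms(3)] by (simp add: successively_append_iff)
  then have "non_backtracking E (ws @ [p, q, r])"
    using assms(3-5) non_backtracking_glue[of E ws p q "[r]"] by simp
  then have "distinct (ws @ [p, q, r])"
    using distinct_if_non_backtracking[OF G girth] assms(6) by force
  then show ?thesis by simp
qed

text \<open>Two vertices at distance two would close the walk into a cycle of length at most its
  number of vertices plus two.\<close>
lemma non_backtracking_ends_no_common_neighbour:
  assumes G: "finite_simple_graph V E" and girth: "girth_at_least V E g"
    and walk: "non_backtracking E xs" and len: "4 \<le> length xs" "length xs + 2 \<le> g"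
  shows "\<not> (E (hd xs) x \<and> E (last xs) x)"
proof
  assume x: "E (hd xs) x \<and> E (last xs) x"
  note sym = finite_simple_graph_adj_sym[OF G]
  obtain u y mid y' v where xs: "xs = u # y # mid @ [y', v]"
    using Cons_Cons_snoc_snoc_if_length_ge_4[OF len(1)] .
  have "distinct xs" using distinct_if_non_backtracking[OF G girth walk] len by force
  then have "y \<noteq> y'" using xs by auto
  have rev_walk: "non_backtracking E (v # y' # rev mid @ [y, u])"
    using non_backtracking_rev[OF _ walk] sym xs by fastforce
  consider "x = y" | "x = y'" | "x \<noteq> y" "x \<noteq> y'" by blast
  then show False
  proof cases
    case 1
    then show False
      using non_backtracking_snoc_not_mem[OF G girth, of "y # mid" y' v x] walk xs x len \<open>y \<noteq> y'\<close>
      by (simp add: non_backtracking_Cons split: list.splits)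
  next
    case 2
    then show False
      using non_backtracking_snoc_not_mem[OF G girth, of "y' # rev mid" y u x] rev_walk xs x len
        \<open>y \<noteq> y'\<close> by (simp add: non_backtracking_Cons split: list.splits)
  next
    case 3
    have "non_backtracking E (x # v # y' # rev mid @ [y, u])"
      using rev_walk x 3 sym xs by (simp add: non_backtracking_Cons)
    then show False
      using non_backtracking_snoc_not_mem[OF G girth, of "x # v # y' # rev mid" y u x] x 3 xs len
      by simp
  qed
qed

lemma non_backtracking_branches_no_common_neighbour:
  assumes G: "finite_simple_graph V E" and girth: "girth_at_least V E g"
    and "non_backtracking E (c # p # xs)" "non_backtracking E (c # q # ys)" "p \<noteq> q"
    and "xs \<noteq> []" "ys \<noteq> []" "length xs + length ys + 5 \<le> g"
  shows "\<not> (E (last xs) x \<and> E (last ys) x)"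
proof -
  have walk: "non_backtracking E (rev xs @ p # c # q # ys)"
    using non_backtracking_join[of E c p xs q ys] finite_simple_graph_adj_sym[OF G] assms(3-5)
    by blast
  have "1 \<le> length xs" using \<open>xs \<noteq> []\<close> by (simp add: Suc_le_eq)
  then show ?thesis
    using non_backtracking_ends_no_common_neighbour[OF G girth walk] assms(6-8)
    by (simp add: hd_append hd_rev del: One_nat_def)
qed

lemma ex_neighbour_noteq:
  assumes G: "finite_simple_graph V E" and deg: "min_degree V E \<ge> 2" and "v \<in> V"
  obtains u where "E v u" "u \<noteq> t"
proof -
  have "min_degree V E \<le> card (nbhd V E v)"
    unfolding min_degree_def using G \<open>v \<in> V\<close> by (intro Min_le) (auto simp: finite_simple_graph_def)
  then have "\<not> nbhd V E v \<subseteq> {t}"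
    using deg card_mono[of "{t}" "nbhd V E v"] by auto
  then show ?thesis using that by (auto simp: nbhd_def)
qed

lemma non_backtracking_extend:
  assumes G: "finite_simple_graph V E" and deg: "min_degree V E \<ge> 2"
    and walk: "non_backtracking E (xs @ [u, v])"
  obtains y where "non_backtracking E (xs @ [u, v, y])"
proof -
  have "E u v"
    using successively_if_non_backtracking[OF walk] by (simp add: successively_append_iff)
  then obtain y where "E v y" "y \<noteq> u"
    using ex_neighbour_noteq[OF G deg, of v u] finite_simple_graph_adj_mem[OF G \<open>E u v\<close>]
    by blast
  then show ?thesis
    using that non_backtracking_glue[OF walk, of "[y]"] \<open>E u v\<close> by simp
qed

lemma ex_centered_non_backtracking_walk:
  assumes G: "finite_simple_graph V E" and deg: "min_degree V E \<ge> 2" and "a \<in> V"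
  obtains w1 w2 b1 b2 where "non_backtracking E [b1, w1, a, w2, b2]"
proof -
  obtain w1 where "E a w1" using ex_neighbour_noteq[OF G deg \<open>a \<in> V\<close>] by blast
  obtain w2 where "E a w2" "w2 \<noteq> w1" using ex_neighbour_noteq[OF G deg \<open>a \<in> V\<close>] by blast
  have "non_backtracking E [w2, a, w1]"
    using \<open>E a w1\<close> \<open>E a w2\<close> \<open>w2 \<noteq> w1\<close> finite_simple_graph_adj_sym[OF G] by simp
  then obtain b1 where "non_backtracking E [w2, a, w1, b1]"
    using non_backtracking_extend[OF G deg, of "[w2]" a w1] by auto
  then have "non_backtracking E [b1, w1, a, w2]"
    using non_backtracking_rev[of E "[w2, a, w1, b1]"] finite_simple_graph_adj_sym[OF G] by simp
  then obtain b2 where "non_backtracking E [b1, w1, a, w2, b2]"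
    using non_backtracking_extend[OF G deg, of "[b1, w1]" a w2] by auto
  then show ?thesis by (rule that)
qed

lemma ex_two_step_extensions:
  assumes G: "finite_simple_graph V E" and deg: "min_degree V E \<ge> 2"
  obtains mid tip where "\<And>w z. E w z \<Longrightarrow> non_backtracking E [w, z, mid w z, tip w z]"
proof -
  have "\<exists>m t. non_backtracking E [w, z, m, t]" if wz: "E w z" for w z
  proof -
    obtain m where "E z m" "m \<noteq> w"
      using ex_neighbour_noteq[OF G deg] finite_simple_graph_adj_mem[OF G wz] by blast
    moreover obtain t where "E m t" "t \<noteq> z"
      using ex_neighbour_noteq[OF G deg] finite_simple_graph_adj_mem[OF G \<open>E z m\<close>] by blast
    ultimately show ?thesis using wz by auto
  qed
  then have "\<exists>mid tip. \<forall>w z. E w z \<longrightarrow> non_backtracking E [w, z, mid w z, tip w z]"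
    by metis
  then show ?thesis using that by blast
qed

lemma open_packing_insert:
  "open_packing V E (insert a P) \<longleftrightarrow> open_packing V E P \<and> a \<in> V \<and>
     (\<forall>v\<in>P. v \<noteq> a \<longrightarrow> \<not> (\<exists>w\<in>V. E a w \<and> E v w))"
  unfolding open_packing_def by fast

lemma open_packing_subset: "open_packing V E P \<Longrightarrow> Q \<subseteq> P \<Longrightarrow> open_packing V E Q"
  unfolding open_packing_def by blast

lemma finite_open_packings: "finite V \<Longrightarrow> finite {P. open_packing V E P}"
  by (rule finite_subset[of _ "Pow V"]) (auto simp: open_packing_def)

lemma ex_maximal_open_packing_superset:
  assumes "finite V" and "open_packing V E S"
  obtains P where "maximal_open_packing V E P" "S \<subseteq> P"
proof -
  let ?A = "{P. open_packing V E P \<and> S \<subseteq> P}"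
  have "finite ?A" using finite_open_packings[OF assms(1)] by (rule finite_subset[rotated]) auto
  moreover have "S \<in> ?A" using assms(2) by simp
  ultimately obtain P where "P \<in> ?A" and "\<forall>Q\<in>?A. P \<subseteq> Q \<longrightarrow> P = Q"
    using finite_has_maximal[of ?A] by blast
  then have "maximal_open_packing V E P"
    unfolding maximal_open_packing_def by auto
  with \<open>P \<in> ?A\<close> show ?thesis using that by blast
qed

lemma open_packing_common_neighbourD:
  "open_packing V E P \<Longrightarrow> u \<in> P \<Longrightarrow> v \<in> P \<Longrightarrow> E u w \<Longrightarrow> E v w \<Longrightarrow> w \<in> V \<Longrightarrow> u = v"
  unfolding open_packing_def by blast

lemma not_in_class_U_if_larger_open_packing:
  assumes "finite V" and "maximal_open_packing V E P" "open_packing V E Q" "card P < card Q"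
  shows "\<not> in_class_U V E"
proof -
  have "finite {P. maximal_open_packing V E P}"
    using finite_open_packings[OF assms(1)]
    by (rule finite_subset[rotated]) (auto simp: maximal_open_packing_def)
  then have "lower_open_packing_number V E \<le> card P"
    unfolding lower_open_packing_number_def using assms(2) by (intro Min_le) auto
  moreover have "card Q \<le> open_packing_number V E"
    unfolding open_packing_number_def using finite_open_packings[OF assms(1)] assms(3)
    by (intro Max_ge) auto
  ultimately show ?thesis unfolding in_class_U_def using assms(4) by simp
qed

locale exchange_configuration =
  fixes V :: "'a set" and E :: "'a \<Rightarrow> 'a \<Rightarrow> bool"
    and a w1 w2 b1 b2 :: 'a and mid tip :: "'a \<Rightarrow> 'a \<Rightarrow> 'a"
  assumes graph: "finite_simple_graph V E"
    and girth: "girth_at_least V E 15"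
    and spine: "non_backtracking E [b1, w1, a, w2, b2]"
    and extension: "\<And>w z. E w z \<Longrightarrow> non_backtracking E [w, z, mid w z, tip w z]"
begin

definition stem :: "'a \<Rightarrow> 'a \<Rightarrow> bool" where
  "stem wb b \<longleftrightarrow> wb = w1 \<and> b = b1 \<or> wb = w2 \<and> b = b2"

definition arm :: "'a \<Rightarrow> 'a \<Rightarrow> 'a \<Rightarrow> 'a \<Rightarrow> bool" where
  "arm wb b w z \<longleftrightarrow> stem wb b \<and> non_backtracking E [a, wb, b, w, z]"

definition leaves :: "'a set" where
  "leaves = {tip w z | wb b w z. arm wb b w z}"

lemma adj_sym: "E u v \<Longrightarrow> E v u"
  using finite_simple_graph_adj_sym[OF graph] .

lemma adj_mem: "E u v \<Longrightarrow> v \<in> V"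
  using finite_simple_graph_adj_mem[OF graph] by blast

lemma spine_distinct: "distinct [b1, w1, a, w2, b2]"
  using distinct_if_non_backtracking[OF graph girth spine] by simp

lemma stem_walk: "stem wb b \<Longrightarrow> non_backtracking E [a, wb, b]"
  using spine spine_distinct adj_sym unfolding stem_def by auto

lemma stem_unique: "stem wb b \<Longrightarrow> stem wb' b' \<Longrightarrow> wb = wb' \<Longrightarrow> b = b'"
  using spine_distinct unfolding stem_def by auto

lemma arm_walk:
  assumes "arm wb b w z"
  shows "non_backtracking E [a, wb, b, w, z, mid w z, tip w z]"
proof -
  have "non_backtracking E ([a, wb, b] @ [w, z])" using assms by (simp add: arm_def)
  moreover have "E w z" using assms by (simp add: arm_def)
  ultimately show ?thesis using non_backtracking_glue extension by fastforce
qed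

lemma open_packing_leaves: "open_packing V E leaves"
  unfolding open_packing_def
proof (intro conjI ballI impI notI)
  show "leaves \<subseteq> V"
    using arm_walk successively_if_non_backtracking adj_mem unfolding leaves_def by fastforce
next
  fix s s' assume "s \<in> leaves" "s' \<in> leaves" "s \<noteq> s'" and "\<exists>x\<in>V. E s x \<and> E s' x"
  then obtain wb b w z wb' b' w' y x where
    arms: "arm wb b w z" "arm wb' b' w' y" and s: "s = tip w z" "s' = tip w' y"
    and x: "E s x" "E s' x"
    unfolding leaves_def by blast
  note walks = arm_walk[OF arms(1)] arm_walk[OF arms(2)]
  consider "wb \<noteq> wb'" | "wb = wb'" "w \<noteq> w'" | "wb = wb'" "w = w'" "z \<noteq> y"
    using \<open>s \<noteq> s'\<close> s by blast
  then show False
  proof cases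
    case 1
    then show False
      using non_backtracking_branches_no_common_neighbour[OF graph girth walks] s x by simp
  next
    case 2
    then have "b = b'" using arms stem_unique unfolding arm_def by blast
    have "non_backtracking E (b # w # [z, mid w z, tip w z])"
      using non_backtracking_appendD2[of E "[a, wb]"] walks(1) by simp
    moreover have "non_backtracking E (b # w' # [y, mid w' y, tip w' y])"
      using non_backtracking_appendD2[of E "[a, wb']"] walks(2) \<open>b = b'\<close> by simp
    ultimately show False
      using non_backtracking_branches_no_common_neighbour[OF graph girth] 2 s x by fastforce
  next
    case 3
    then show False
      using non_backtracking_branches_no_common_neighbour[OF graph girth,
          of w z "[mid w z, tip w z]" y "[mid w y, tip w y]"]
        extension arms s x unfolding arm_def by simp
  qed
qed

lemma open_packing_center_leaves: "open_packing V E (insert a leaves)"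
  unfolding open_packing_insert
proof (intro conjI ballI impI notI)
  show "open_packing V E leaves" by (rule open_packing_leaves)
  show "a \<in> V" using spine adj_mem adj_sym by auto
next
  fix s assume "s \<in> leaves" and "\<exists>x\<in>V. E a x \<and> E s x"
  then obtain wb b w z x where arm: "arm wb b w z" and x: "E a x" "E (tip w z) x"
    unfolding leaves_def by blast
  show False
    using non_backtracking_ends_no_common_neighbour[OF graph girth arm_walk[OF arm]] x by simp
qed

lemma stem_root_not_mem:
  assumes "open_packing V E P" "a \<in> P" "stem wb b"
  shows "b \<notin> P"
proof
  assume "b \<in> P"
  have "non_backtracking E [a, wb, b]" using stem_walk[OF assms(3)] .
  then show False
    using open_packing_common_neighbourD[OF assms(1,2) \<open>b \<in> P\<close>, of wb] adj_sym adj_mem by auto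
qed

lemma stem_root_no_common_neighbour:
  assumes P: "open_packing V E P" "insert a leaves \<subseteq> P" and "stem wb b" "u \<in> P" "u \<noteq> a"
  shows "\<not> (E b x \<and> E u x)"
proof
  assume x: "E b x \<and> E u x"
  have "b \<notin> P" using stem_root_not_mem[OF P(1) _ \<open>stem wb b\<close>] P(2) by blast
  show False
  proof (cases "x = wb")
    case True
    then show False
      using open_packing_common_neighbourD[OF P(1), of a u x] stem_walk[OF \<open>stem wb b\<close>]
        P(2) x \<open>u \<in> P\<close> \<open>u \<noteq> a\<close> adj_mem by auto
  next
    case False
    then have "arm wb b x u"
      using stem_walk[OF \<open>stem wb b\<close>] \<open>stem wb b\<close> x \<open>b \<notin> P\<close> \<open>u \<in> P\<close> adj_sym
      unfolding arm_def by auto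
    then have "tip x u \<in> P" using P(2) unfolding leaves_def by blast
    moreover have "non_backtracking E [x, u, mid x u, tip x u]" using extension adj_sym x by blast
    ultimately show False
      using open_packing_common_neighbourD[OF P(1) \<open>u \<in> P\<close>, of "tip x u" "mid x u"]
        adj_sym adj_mem by auto
  qed
qed

lemma open_packing_exchange:
  assumes P: "open_packing V E P" "insert a leaves \<subseteq> P"
  shows "open_packing V E (insert b1 (insert b2 (P - {a})))"
  unfolding open_packing_insert
proof (intro conjI ballI impI notI)
  show "open_packing V E (P - {a})" using open_packing_subset[OF P(1)] by blast
  show "b1 \<in> V" "b2 \<in> V" using spine adj_mem adj_sym by auto
next
  fix v assume "v \<in> P - {a}" and "\<exists>x\<in>V. E b2 x \<and> E v x"
  then show False using stem_root_no_common_neighbour[OF P, of w2 b2 v] by (auto simp: stem_def)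
next
  fix v assume "v \<in> insert b2 (P - {a})" "v \<noteq> b1" and "\<exists>x\<in>V. E b1 x \<and> E v x"
  moreover have "\<not> (E b1 x \<and> E b2 x)" for x
    using non_backtracking_ends_no_common_neighbour[OF graph girth spine] by simp
  ultimately show False
    using stem_root_no_common_neighbour[OF P, of w1 b1 v] by (auto simp: stem_def)
qed

lemma card_exchange:
  assumes P: "open_packing V E P" "insert a leaves \<subseteq> P"
  shows "card (insert b1 (insert b2 (P - {a}))) = Suc (card P)"
proof -
  have "finite P"
    using P(1) graph finite_subset unfolding open_packing_def finite_simple_graph_def by blast
  moreover have "b1 \<notin> P" "b2 \<notin> P"
    using stem_root_not_mem[OF P(1)] P(2) unfolding stem_def by blast+
  moreover have "a \<in> P" using P(2) by blast
  ultimately show ?thesis using spine_distinct card_Suc_Diff1[of P a] by simp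
qed

end

theorem lemma2:
  fixes V :: "'a set" and E :: "'a \<Rightarrow> 'a \<Rightarrow> bool"
  assumes "finite_simple_graph V E"
    and "girth_at_least V E 15"
    and "min_degree V E \<ge> 2"
  shows "\<not> in_class_U V E"
proof -
  note G = assms(1) and deg = assms(3)
  have "finite V" "V \<noteq> {}" using G by (simp_all add: finite_simple_graph_def)
  then obtain a where "a \<in> V" by blast
  obtain w1 w2 b1 b2 where spine: "non_backtracking E [b1, w1, a, w2, b2]"
    using ex_centered_non_backtracking_walk[OF G deg \<open>a \<in> V\<close>] .
  obtain mid tip where "\<And>w z. E w z \<Longrightarrow> non_backtracking E [w, z, mid w z, tip w z]"
    using ex_two_step_extensions[OF G deg] by blast
  then interpret exchange_configuration V E a w1 w2 b1 b2 mid tip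
    using G assms(2) spine by unfold_locales
  obtain P where P: "maximal_open_packing V E P" "insert a leaves \<subseteq> P"
    using ex_maximal_open_packing_superset[OF \<open>finite V\<close> open_packing_center_leaves] .
  then have "open_packing V E P" by (simp add: maximal_open_packing_def)
  show ?thesis
  proof (rule not_in_class_U_if_larger_open_packing[OF \<open>finite V\<close> P(1)])
    show "open_packing V E (insert b1 (insert b2 (P - {a})))"
      using open_packing_exchange[OF \<open>open_packing V E P\<close> P(2)] .
    show "card P < card (insert b1 (insert b2 (P - {a})))"
      using card_exchange[OF \<open>open_packing V E P\<close> P(2)] by simp
  qed
qed

end
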